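(* Let $I=\langle Q,D,\tau_{in},\tau_{out},\tau_{mem}\rangle$ be an instance of Forget where $Q$ is nonrecursive, connected, contains no rigid atoms and no time points in its rules, and let $Q_1,Q_2$ be the queries constructed from $I$ as in the context. Then Forget holds for $I$ if and only if $Q_1\sqsubseteq Q_2$.
   Context: Temporal Datalog. Constants are partitioned into objects and integer time points; variables into object variables and time variables. A time term is a time point, a time variable, or an expression $t+k$ with $t$ a time variable and $k\in\mathbb{Z}$. Each predicate is either extensional (EDB) or intensional (IDB) and has an arity $n\ge0$, each position being of object sort or time sort; a predicate is rigid if all its positions are of object sort, and temporal if its last position is of time sort and all others are of object sort. An atom $P(t_1,\dots,t_n)$ has terms of the required sorts. A rule is $\bigwedge_i\alpha_i\to\alpha$ with $\alpha$ and all $\alpha_i$ rigid or temporal atoms, $\alpha$ IDB whenever the body is nonempty, and every head variable occurring in the body. A program is a finite set of rules. A fact is a ground rigid or temporal atom without $+$ (identified with the rule $\top\to\alpha$); a dataset is a finite set of EDB facts. Rules are read as universally quantified first-order sentences with $+$ interpreted as integer addition; $\Pi\models\alpha$ denotes entailment. A query is $Q=\langle P_Q,\Pi_Q\rangle$ with $\Pi_Q$ a program and $P_Q$ an IDB predicate of $\Pi_Q$; it is temporal if $P_Q$ is temporal. $Q(D)$ is the set of tuples $\vec a$ of constants with $\Pi_Q\cup D\models P_Q(\vec a)$; for a temporal query $Q$ and time point $\tau$, $Q(D,\tau)$ is the set of tuples of objects $\vec o$ with $\Pi_Q\cup D\models P_Q(\vec o,\tau)$. $Q_1\sqsubseteq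 Q_2$ means $Q_1(D)\subseteq Q_2(D)$ for every dataset $D$. For a dataset $D$ and time point $\tau$, $D[\tau]$ is the set of all rigid facts of $D$ together with the temporal facts of $D$ whose time argument is $>\tau$. A $\tau_{in}$-history is a dataset consisting of rigid facts and temporal facts with time argument $\le\tau_{in}$; a $\tau_{in}$-update is a dataset consisting of temporal facts with time argument $>\tau_{in}$. Forget: an instance is $\langle Q,D,\tau_{in},\tau_{out},\tau_{mem}\rangle$ with $Q$ a temporal query, $D$ a $\tau_{in}$-history and $\tau_{mem}\le\tau_{out}\le\tau_{in}$; Forget holds for it iff $Q(D\cup U,\tau)=Q(D[\tau_{mem}]\cup U,\tau)$ for every $\tau_{in}$-update $U$ and every time point $\tau\ge\tau_{out}$. Predicate $P$ depends on $P'$ in $\Pi$ if some rule of $\Pi$ has $P$ in the head and $P'$ in the body; $\Pi$ (or a query with program $\Pi$) is nonrecursive if the graph of this dependency relation is acyclic. A rule is connected if it contains at most one time variable and, if a time variable occurs in the body, it also occurs in the head; a query is connected if all its rules are. For a time term $s$, $\Delta(s)=k$ if $s=t+k$ with $t$ a variable, and $\Delta(s)=0$ otherwise. The radius of a connected rule $r$ mentioning a time variable is the maximum of $|\Delta(s)-\Delta(s')|$ where $s$ is the time argument of the head and $s'$ the time argument of a body atom of $r$. The radius $\mathrm{rad}(\Pi)$ of a connected program is the number of rules of $\Pi$ times the maximum radius of a rule of $\Pi$; $\mathrm{rad}(Q)=\mathrm{rad}(\Pi_Q)$. Construction: a time point $\tau$ is output-relevant if $\tau_{out}\le\tau\le\tau_{mem}+\mathrm{rad}(Q)$,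 and update-relevant if $\tau_{in}<\tau\le\tau_{mem}+2\,\mathrm{rad}(Q)$. Let $\psi$ map each temporal EDB predicate to a fresh temporal IDB predicate of the same arity (applied to programs/datasets by renaming). Let $B$ be a fresh unary temporal IDB predicate and $D_0=\{B(\tau):\tau\text{ update-relevant}\}$. Let $\Pi$ be the smallest program containing: (i) each rule of $\psi(\Pi_Q)$ whose head predicate differs from $P_Q$; (ii) each rule obtained from a rule of $\psi(\Pi_Q)$ with head predicate $P_Q$ by substituting its time variable so that the time argument of the head becomes an output-relevant time point; (iii) the rule $P(\vec x,t)\wedge B(t)\to\psi(P)(\vec x,t)$ for each temporal EDB predicate $P$ of $\Pi_Q$. Then $Q_1=\langle P_Q,\Pi\cup D_0\cup\psi(D)\rangle$ and $Q_2=\langle P_Q,\Pi\cup D_0\cup\psi(D[\tau_{mem}])\rangle$. *)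

theory Defs
  imports Main
begin

text \<open>Signature of a predicate: it is rigid with n object positions, or temporal with
  n object positions followed by one time position.  (Only rigid and temporal predicates
  can occur in rules and facts.)  A signature maps each predicate to a pair
  (is EDB, shape); IDB means not EDB.\<close>

datatype pshape = Rigid nat | Temporal nat

type_synonym 'p signature = "'p \<Rightarrow> bool \<times> pshape"

text \<open>Time terms: time points, or t + k for a time variable t and k an integer
  (the plain variable t is represented as t + 0).\<close>

datatype 'o oterm = OC 'o | OV nat
datatype tterm = TC int | TV nat int

datatype ('p,'o) atom = Atom 'p "'o oterm list" "tterm option"

type_synonym ('p,'o) rule = "('p,'o) atom list \<times> ('p,'o) atom"

datatype ('p,'o) gatom = GA 'p "'o list" "int option"

fun apred :: "('p,'o) atom \<Rightarrow> 'p" where "apred (Atom p _ _) = p"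
fun atime :: "('p,'o) atom \<Rightarrow> tterm option" where "atime (Atom _ _ t) = t"
fun gpred :: "('p,'o) gatom \<Rightarrow> 'p" where "gpred (GA p _ _) = p"
fun gtime :: "('p,'o) gatom \<Rightarrow> int option" where "gtime (GA _ _ t) = t"

fun ovar_of :: "'o oterm \<Rightarrow> nat set" where
  "ovar_of (OC _) = {}" | "ovar_of (OV x) = {x}"
fun tvar_of :: "tterm \<Rightarrow> nat set" where
  "tvar_of (TC _) = {}" | "tvar_of (TV t _) = {t}"

fun aovars :: "('p,'o) atom \<Rightarrow> nat set" where
  "aovars (Atom _ os _) = (\<Union>x\<in>set os. ovar_of x)"
fun atvars :: "('p,'o) atom \<Rightarrow> nat set" where
  "atvars (Atom _ _ t) = (case t of None \<Rightarrow> {} | Some s \<Rightarrow> tvar_of s)"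

definition is_edb :: "'p signature \<Rightarrow> 'p \<Rightarrow> bool" where
  "is_edb sig p = fst (sig p)"

definition is_temporal :: "'p signature \<Rightarrow> 'p \<Rightarrow> bool" where
  "is_temporal sig p = (\<exists>n. snd (sig p) = Temporal n)"

definition is_rigid :: "'p signature \<Rightarrow> 'p \<Rightarrow> bool" where
  "is_rigid sig p = (\<exists>n. snd (sig p) = Rigid n)"

fun wf_atom :: "'p signature \<Rightarrow> ('p,'o) atom \<Rightarrow> bool" where
  "wf_atom sig (Atom p os t) =
     (case snd (sig p) of Rigid n \<Rightarrow> length os = n \<and> t = None
                        | Temporal n \<Rightarrow> length os = n \<and> t \<noteq> None)"

fun wf_gatom :: "'p signature \<Rightarrow> ('p,'o) gatom \<Rightarrow> bool" where
  "wf_gatom sig (GA p os t) =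
     (case snd (sig p) of Rigid n \<Rightarrow> length os = n \<and> t = None
                        | Temporal n \<Rightarrow> length os = n \<and> t \<noteq> None)"

definition wf_rule :: "'p signature \<Rightarrow> ('p,'o) rule \<Rightarrow> bool" where
  "wf_rule sig r =
     ((\<forall>a\<in>set (snd r # fst r). wf_atom sig a)
      \<and> (fst r \<noteq> [] \<longrightarrow> \<not> is_edb sig (apred (snd r)))
      \<and> aovars (snd r) \<subseteq> (\<Union>a\<in>set (fst r). aovars a)
      \<and> atvars (snd r) \<subseteq> (\<Union>a\<in>set (fst r). atvars a))"

definition wf_program :: "'p signature \<Rightarrow> ('p,'o) rule set \<Rightarrow> bool" where
  "wf_program sig \<Pi> = (finite \<Pi> \<and> (\<forall>r\<in>\<Pi>. wf_rule sig r))"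

definition rule_atoms :: "('p,'o) rule \<Rightarrow> ('p,'o) atom set" where
  "rule_atoms r = set (snd r # fst r)"

definition preds_of :: "('p,'o) rule set \<Rightarrow> 'p set" where
  "preds_of \<Pi> = {apred a | a r. r \<in> \<Pi> \<and> a \<in> rule_atoms r}"

fun fact_rule :: "('p,'o) gatom \<Rightarrow> ('p,'o) rule" where
  "fact_rule (GA p os t) = ([], Atom p (map OC os) (map_option TC t))"

fun oinst :: "(nat \<Rightarrow> 'o) \<Rightarrow> 'o oterm \<Rightarrow> 'o" where
  "oinst \<nu> (OC c) = c" | "oinst \<nu> (OV x) = \<nu> x"
fun tinst :: "(nat \<Rightarrow> int) \<Rightarrow> tterm \<Rightarrow> int" where
  "tinst \<mu> (TC c) = c" | "tinst \<mu> (TV t k) = \<mu> t + k"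
fun inst :: "(nat \<Rightarrow> 'o) \<Rightarrow> (nat \<Rightarrow> int) \<Rightarrow> ('p,'o) atom \<Rightarrow> ('p,'o) gatom" where
  "inst \<nu> \<mu> (Atom p os t) = GA p (map (oinst \<nu>) os) (map_option (tinst \<mu>) t)"

text \<open>(Herbrand) interpretations are sets of ground atoms; time is interpreted in the
  integers with + as integer addition; rules are universally quantified.\<close>
definition is_model :: "('p,'o) rule set \<Rightarrow> ('p,'o) gatom set \<Rightarrow> bool" where
  "is_model \<Pi> I = (\<forall>r\<in>\<Pi>. \<forall>\<nu> \<mu>. (\<forall>a\<in>set (fst r). inst \<nu> \<mu> a \<in> I) \<longrightarrow> inst \<nu> \<mu> (snd r) \<in> I)"

definition entails :: "('p,'o) rule set \<Rightarrow> ('p,'o) gatom \<Rightarrow> bool" where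
  "entails \<Pi> \<alpha> = (\<forall>I. is_model \<Pi> I \<longrightarrow> \<alpha> \<in> I)"

definition dataset :: "'p signature \<Rightarrow> ('p,'o) gatom set \<Rightarrow> bool" where
  "dataset sig D = (finite D \<and> (\<forall>\<alpha>\<in>D. wf_gatom sig \<alpha> \<and> is_edb sig (gpred \<alpha>)))"

type_synonym ('p,'o) query = "'p \<times> ('p,'o) rule set"

definition is_query :: "'p signature \<Rightarrow> ('p,'o) query \<Rightarrow> bool" where
  "is_query sig Q = (wf_program sig (snd Q) \<and> fst Q \<in> preds_of (snd Q) \<and> \<not> is_edb sig (fst Q))"

definition is_temporal_query :: "'p signature \<Rightarrow> ('p,'o) query \<Rightarrow> bool" where
  "is_temporal_query sig Q = (is_query sig Q \<and> is_temporal sig (fst Q))"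

definition answers :: "('p,'o) query \<Rightarrow> ('p,'o) gatom set \<Rightarrow> ('o list \<times> int option) set" where
  "answers Q D = {(os, t). entails (snd Q \<union> fact_rule ` D) (GA (fst Q) os t)}"

definition answers_at :: "('p,'o) query \<Rightarrow> ('p,'o) gatom set \<Rightarrow> int \<Rightarrow> 'o list set" where
  "answers_at Q D \<tau> = {os. entails (snd Q \<union> fact_rule ` D) (GA (fst Q) os (Some \<tau>))}"

definition contained :: "'p signature \<Rightarrow> ('p,'o) query \<Rightarrow> ('p,'o) query \<Rightarrow> bool" where
  "contained sig Q1 Q2 = (\<forall>D. dataset sig D \<longrightarrow> answers Q1 D \<subseteq> answers Q2 D)"

definition restrict_after :: "('p,'o) gatom set \<Rightarrow> int \<Rightarrow> ('p,'o) gatom set" where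
  "restrict_after D \<tau> = {\<alpha>\<in>D. gtime \<alpha> = None \<or> (\<exists>s. gtime \<alpha> = Some s \<and> s > \<tau>)}"

definition is_history :: "'p signature \<Rightarrow> int \<Rightarrow> ('p,'o) gatom set \<Rightarrow> bool" where
  "is_history sig \<tau>in D = (dataset sig D \<and> (\<forall>\<alpha>\<in>D. \<forall>s. gtime \<alpha> = Some s \<longrightarrow> s \<le> \<tau>in))"

definition is_update :: "'p signature \<Rightarrow> int \<Rightarrow> ('p,'o) gatom set \<Rightarrow> bool" where
  "is_update sig \<tau>in U = (dataset sig U \<and> (\<forall>\<alpha>\<in>U. \<exists>s. gtime \<alpha> = Some s \<and> s > \<tau>in))"

definition forget_instance ::
  "'p signature \<Rightarrow> ('p,'o) query \<Rightarrow> ('p,'o) gatom set \<Rightarrow> int \<Rightarrow> int \<Rightarrow> int \<Rightarrow> bool" where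
  "forget_instance sig Q D \<tau>in \<tau>out \<tau>mem =
     (is_temporal_query sig Q \<and> is_history sig \<tau>in D \<and> \<tau>mem \<le> \<tau>out \<and> \<tau>out \<le> \<tau>in)"

definition forget_holds ::
  "'p signature \<Rightarrow> ('p,'o) query \<Rightarrow> ('p,'o) gatom set \<Rightarrow> int \<Rightarrow> int \<Rightarrow> int \<Rightarrow> bool" where
  "forget_holds sig Q D \<tau>in \<tau>out \<tau>mem =
     (\<forall>U \<tau>. is_update sig \<tau>in U \<longrightarrow> \<tau> \<ge> \<tau>out \<longrightarrow>
        answers_at Q (D \<union> U) \<tau> = answers_at Q (restrict_after D \<tau>mem \<union> U) \<tau>)"

definition depends :: "('p,'o) rule set \<Rightarrow> ('p \<times> 'p) set" where
  "depends \<Pi> = {(apred (snd r), apred a) | r a. r \<in> \<Pi> \<and> a \<in> set (fst r)}"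

definition nonrecursive :: "('p,'o) rule set \<Rightarrow> bool" where
  "nonrecursive \<Pi> = acyclic (depends \<Pi>)"

definition rule_tvars :: "('p,'o) rule \<Rightarrow> nat set" where
  "rule_tvars r = (\<Union>a\<in>rule_atoms r. atvars a)"

definition connected_rule :: "('p,'o) rule \<Rightarrow> bool" where
  "connected_rule r = (card (rule_tvars r) \<le> 1
      \<and> (\<Union>a\<in>set (fst r). atvars a) \<subseteq> atvars (snd r))"

definition connected_prog :: "('p,'o) rule set \<Rightarrow> bool" where
  "connected_prog \<Pi> = (\<forall>r\<in>\<Pi>. connected_rule r)"

definition no_rigid_atoms :: "'p signature \<Rightarrow> ('p,'o) rule set \<Rightarrow> bool" where
  "no_rigid_atoms sig \<Pi> = (\<forall>r\<in>\<Pi>. \<forall>a\<in>rule_atoms r. \<not> is_rigid sig (apred a))"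

definition no_time_points :: "('p,'o) rule set \<Rightarrow> bool" where
  "no_time_points \<Pi> = (\<forall>r\<in>\<Pi>. \<forall>a\<in>rule_atoms r. \<forall>c. atime a \<noteq> Some (TC c))"

fun delta :: "tterm \<Rightarrow> int" where
  "delta (TV _ k) = k" | "delta (TC _) = 0"

definition rule_radius :: "('p,'o) rule \<Rightarrow> int" where
  "rule_radius r = Max ({0} \<union> {\<bar>delta s - delta s'\<bar> | s s' a.
       atime (snd r) = Some s \<and> a \<in> set (fst r) \<and> atime a = Some s'})"

definition prog_radius :: "('p,'o) rule set \<Rightarrow> int" where
  "prog_radius \<Pi> = int (card \<Pi>) * Max ({0} \<union> rule_radius ` \<Pi>)"

datatype 'p xpred = Orig 'p | Psi 'p | Bp

definition xsig :: "'p signature \<Rightarrow> 'p xpred signature" where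
  "xsig sig q = (case q of Orig p \<Rightarrow> sig p
                        | Psi p \<Rightarrow> (False, snd (sig p))
                        | Bp \<Rightarrow> (False, Temporal 0))"

definition psi :: "'p signature \<Rightarrow> 'p \<Rightarrow> 'p xpred" where
  "psi sig p = (if is_edb sig p \<and> is_temporal sig p then Psi p else Orig p)"

fun psi_atom :: "'p signature \<Rightarrow> ('p,'o) atom \<Rightarrow> ('p xpred,'o) atom" where
  "psi_atom sig (Atom p os t) = Atom (psi sig p) os t"

definition psi_rule :: "'p signature \<Rightarrow> ('p,'o) rule \<Rightarrow> ('p xpred,'o) rule" where
  "psi_rule sig r = (map (psi_atom sig) (fst r), psi_atom sig (snd r))"

fun psi_gatom :: "'p signature \<Rightarrow> ('p,'o) gatom \<Rightarrow> ('p xpred,'o) gatom" where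
  "psi_gatom sig (GA p os t) = GA (psi sig p) os t"

fun subst_t :: "nat \<Rightarrow> int \<Rightarrow> tterm \<Rightarrow> tterm" where
  "subst_t v c (TV v' k) = (if v' = v then TC (c + k) else TV v' k)"
| "subst_t v c (TC d) = TC d"

fun subst_atom :: "nat \<Rightarrow> int \<Rightarrow> ('p,'o) atom \<Rightarrow> ('p,'o) atom" where
  "subst_atom v c (Atom p os t) = Atom p os (map_option (subst_t v c) t)"

definition subst_rule :: "nat \<Rightarrow> int \<Rightarrow> ('p,'o) rule \<Rightarrow> ('p,'o) rule" where
  "subst_rule v c r = (map (subst_atom v c) (fst r), subst_atom v c (snd r))"

definition output_relevant :: "('p,'o) query \<Rightarrow> int \<Rightarrow> int \<Rightarrow> int \<Rightarrow> bool" where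
  "output_relevant Q \<tau>out \<tau>mem \<tau> = (\<tau>out \<le> \<tau> \<and> \<tau> \<le> \<tau>mem + prog_radius (snd Q))"

definition update_relevant :: "('p,'o) query \<Rightarrow> int \<Rightarrow> int \<Rightarrow> int \<Rightarrow> bool" where
  "update_relevant Q \<tau>in \<tau>mem \<tau> = (\<tau>in < \<tau> \<and> \<tau> \<le> \<tau>mem + 2 * prog_radius (snd Q))"

definition constr_prog ::
  "'p signature \<Rightarrow> ('p,'o) query \<Rightarrow> int \<Rightarrow> int \<Rightarrow> ('p xpred,'o) rule set" where
  "constr_prog sig Q \<tau>out \<tau>mem =
     {r \<in> psi_rule sig ` snd Q. apred (snd r) \<noteq> Orig (fst Q)}
   \<union> {subst_rule v (\<tau> - k) r | r v k \<tau>. r \<in> psi_rule sig ` snd Q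
        \<and> apred (snd r) = Orig (fst Q) \<and> atime (snd r) = Some (TV v k)
        \<and> output_relevant Q \<tau>out \<tau>mem \<tau>}
   \<union> {([Atom (Orig p) (map OV [0..<n]) (Some (TV 0 0)), Atom Bp [] (Some (TV 0 0))],
         Atom (Psi p) (map OV [0..<n]) (Some (TV 0 0))) | p n.
        p \<in> preds_of (snd Q) \<and> is_edb sig p \<and> snd (sig p) = Temporal n}"

definition D0 :: "('p,'o) query \<Rightarrow> int \<Rightarrow> int \<Rightarrow> ('p xpred,'o) gatom set" where
  "D0 Q \<tau>in \<tau>mem = {GA Bp [] (Some \<tau>) | \<tau>. update_relevant Q \<tau>in \<tau>mem \<tau>}"

definition Q1 ::
  "'p signature \<Rightarrow> ('p,'o) query \<Rightarrow> ('p,'o) gatom set \<Rightarrow> int \<Rightarrow> int \<Rightarrow> int \<Rightarrow> ('p xpred,'o) query" where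
  "Q1 sig Q D \<tau>in \<tau>out \<tau>mem =
     (Orig (fst Q), constr_prog sig Q \<tau>out \<tau>mem \<union> fact_rule ` D0 Q \<tau>in \<tau>mem
                    \<union> fact_rule ` psi_gatom sig ` D)"

definition Q2 ::
  "'p signature \<Rightarrow> ('p,'o) query \<Rightarrow> ('p,'o) gatom set \<Rightarrow> int \<Rightarrow> int \<Rightarrow> int \<Rightarrow> ('p xpred,'o) query" where
  "Q2 sig Q D \<tau>in \<tau>out \<tau>mem =
     (Orig (fst Q), constr_prog sig Q \<tau>out \<tau>mem \<union> fact_rule ` D0 Q \<tau>in \<tau>mem
                    \<union> fact_rule ` psi_gatom sig ` restrict_after D \<tau>mem)"

end

theory Submission
  imports Defs
begin

text \<open>A derivation of an answer at time \<open>\<tau>\<close> in a nonrecursive connected program only looks at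
  data within distance \<open>rad(Q)\<close> of \<open>\<tau>\<close>: each rule application shifts time by at most the
  maximal rule radius, and a derivation path meets each rule at most once.  Hence for
  \<open>\<tau> > \<tau>mem + rad(Q)\<close> the forgotten part of the history is invisible, and for the remaining
  output-relevant \<open>\<tau>\<close> only update facts at update-relevant time points matter.  The program of
  \<open>Q1\<close> simulates \<open>Q\<close> on the history together with exactly those update facts, read off an
  arbitrary dataset \<open>D'\<close> through the guard \<open>B\<close>, and answers only at output-relevant points;
  so \<open>Q1 \<sqsubseteq> Q2\<close> says precisely that forgetting is harmless for all such updates and times.\<close>

inductive derivable :: "('p,'o) rule set \<Rightarrow> ('p,'o) gatom \<Rightarrow> bool" for \<Pi> where
  der: "r \<in> \<Pi> \<Longrightarrow> (\<And>a. a \<in> set (fst r) \<Longrightarrow> derivable \<Pi> (inst \<nu> \<mu> a))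
    \<Longrightarrow> derivable \<Pi> (inst \<nu> \<mu> (snd r))"

lemma derivable_in_model: "derivable \<Pi> g \<Longrightarrow> is_model \<Pi> I \<Longrightarrow> g \<in> I"
  by (induction rule: derivable.induct) (auto simp: is_model_def)

lemma is_model_derivable: "is_model \<Pi> {g. derivable \<Pi> g}"
  unfolding is_model_def by (auto intro: der)

lemma entails_iff_derivable: "entails \<Pi> g \<longleftrightarrow> derivable \<Pi> g"
  unfolding entails_def using derivable_in_model is_model_derivable by blast

lemma derivable_mono: "derivable \<Pi> g \<Longrightarrow> \<Pi> \<subseteq> \<Pi>' \<Longrightarrow> derivable \<Pi>' g"
  by (induction rule: derivable.induct) (auto intro: der)

lemma derivable_mono_facts:
  "derivable (\<Pi> \<union> fact_rule ` F) g \<Longrightarrow> F \<subseteq> G \<Longrightarrow> derivable (\<Pi> \<union> fact_rule ` G) g"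
  by (erule derivable_mono) auto

lemma fact_rule_simps [simp]: "fst (fact_rule g) = []" "inst \<nu> \<mu> (snd (fact_rule g)) = g"
  by (cases g; simp add: option.map_comp comp_def option.map_ident)+

lemma derivable_fact: "fact_rule g \<in> \<Pi> \<Longrightarrow> derivable \<Pi> g"
  using der[of "fact_rule g" \<Pi> undefined undefined] by simp

lemma mem_answers_at_iff:
  "os \<in> answers_at Q F \<tau> \<longleftrightarrow> derivable (snd Q \<union> fact_rule ` F) (GA (fst Q) os (Some \<tau>))"
  by (simp add: answers_at_def entails_iff_derivable)

lemma answers_at_mono: "F \<subseteq> G \<Longrightarrow> answers_at Q F \<tau> \<subseteq> answers_at Q G \<tau>"
  by (auto simp: mem_answers_at_iff elim: derivable_mono_facts)

section \<open>Locality of derivations\<close>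

definition dep_rank :: "('p,'o) rule set \<Rightarrow> 'p \<Rightarrow> nat" where
  "dep_rank \<Pi> q = card {r\<in>\<Pi>. (q, apred (snd r)) \<in> (depends \<Pi>)\<^sup>*}"

lemma dep_rank_less:
  assumes "finite \<Pi>" "acyclic (depends \<Pi>)" "r \<in> \<Pi>" "b \<in> set (fst r)"
  shows "dep_rank \<Pi> (apred b) < dep_rank \<Pi> (apred (snd r))"
proof -
  let ?above = "\<lambda>q. {r'\<in>\<Pi>. (q, apred (snd r')) \<in> (depends \<Pi>)\<^sup>*}"
  have dep: "(apred (snd r), apred b) \<in> depends \<Pi>"
    using assms unfolding depends_def by blast
  have "?above (apred b) \<subseteq> ?above (apred (snd r))"
    using dep by (auto intro: converse_rtrancl_into_rtrancl)
  moreover have "r \<notin> ?above (apred b)"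
  proof
    assume "r \<in> ?above (apred b)"
    with dep have "(apred (snd r), apred (snd r)) \<in> (depends \<Pi>)\<^sup>+"
      by (auto intro: rtrancl_into_trancl2)
    with assms(2) show False by (simp add: acyclic_def)
  qed
  moreover have "r \<in> ?above (apred (snd r))" using assms(3) by simp
  ultimately have "?above (apred b) \<subset> ?above (apred (snd r))" by blast
  then show ?thesis
    unfolding dep_rank_def using assms(1) by (intro psubset_card_mono) auto
qed

lemma dep_rank_le_card: "finite \<Pi> \<Longrightarrow> dep_rank \<Pi> q \<le> card \<Pi>"
  unfolding dep_rank_def by (rule card_mono) auto

definition time_local_rule :: "int \<Rightarrow> ('p,'o) rule \<Rightarrow> bool" where
  "time_local_rule m r = (\<exists>v k q os. snd r = Atom q os (Some (TV v k)) \<and>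
     (\<forall>b\<in>set (fst r). \<exists>kb qb osb. b = Atom qb osb (Some (TV v kb)) \<and> \<bar>k - kb\<bar> \<le> m))"

lemma time_local_rule_mono: "time_local_rule m r \<Longrightarrow> m \<le> m' \<Longrightarrow> time_local_rule m' r"
  unfolding time_local_rule_def by (meson order_trans)

definition facts_near :: "('p,'o) gatom set \<Rightarrow> int \<Rightarrow> int \<Rightarrow> ('p,'o) gatom set" where
  "facts_near F t w = {f\<in>F. \<forall>s. gtime f = Some s \<longrightarrow> \<bar>s - t\<bar> \<le> w}"

lemma facts_near_mono: "w \<le> w' \<Longrightarrow> facts_near F t w \<subseteq> facts_near F t w'"
  unfolding facts_near_def by force

text \<open>The level function \<open>h\<close> strictly decreases from heads to bodies, so a fact of level \<open>h\<close>
  at time \<open>t\<close> only depends on data at distance \<open>h * m\<close> from \<open>t\<close>.\<close>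

lemma derivable_facts_near_level:
  assumes "derivable (\<Pi> \<union> fact_rule ` F) g" and "gtime g = Some t"
    and local: "\<forall>r\<in>\<Pi>. time_local_rule m r" and "0 \<le> m"
    and level: "\<And>r b. r \<in> \<Pi> \<Longrightarrow> b \<in> set (fst r) \<Longrightarrow> h (apred b) < (h (apred (snd r)) :: nat)"
  shows "derivable (\<Pi> \<union> fact_rule ` facts_near F t (int (h (gpred g)) * m)) g"
  using assms(1,2)
proof (induction arbitrary: t rule: derivable.induct)
  case (der r \<nu> \<mu>)
  from der.hyps(1) show ?case
  proof
    assume r: "r \<in> \<Pi>"
    then obtain v k q os where head: "snd r = Atom q os (Some (TV v k))"
      and body: "\<forall>b\<in>set (fst r). \<exists>kb qb osb. b = Atom qb osb (Some (TV v kb)) \<and> \<bar>k - kb\<bar> \<le> m"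
      using local unfolding time_local_rule_def by blast
    have t: "t = \<mu> v + k" using der.prems head by simp
    have "derivable (\<Pi> \<union> fact_rule ` facts_near F t (int (h q) * m)) (inst \<nu> \<mu> a)"
      if a: "a \<in> set (fst r)" for a
    proof -
      obtain kb qb osb where b: "a = Atom qb osb (Some (TV v kb))" "\<bar>k - kb\<bar> \<le> m"
        using body a by blast
      have "h qb < h q" using level[OF r a] head b by simp
      then have "(int (h qb) + 1) * m \<le> int (h q) * m"
        using \<open>0 \<le> m\<close> by (intro mult_right_mono) auto
      then have "facts_near F (\<mu> v + kb) (int (h qb) * m) \<subseteq> facts_near F t (int (h q) * m)"
        using b(2) t unfolding facts_near_def by (auto simp: algebra_simps)
      with der.IH[OF a, of "\<mu> v + kb"] b show ?thesis
        by (auto elim: derivable_mono_facts)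
    qed
    with r have "derivable (\<Pi> \<union> fact_rule ` facts_near F t (int (h q) * m)) (inst \<nu> \<mu> (snd r))"
      by (intro derivable.der) auto
    then show ?thesis using head by simp
  next
    assume "r \<in> fact_rule ` F"
    then obtain f where f: "r = fact_rule f" "f \<in> F" by blast
    with der.prems \<open>0 \<le> m\<close> have "f \<in> facts_near F t (int (h (gpred f)) * m)"
      unfolding facts_near_def by auto
    with f show ?thesis by (auto intro: derivable_fact)
  qed
qed

lemma answers_at_facts_near:
  assumes "finite (snd Q)" "acyclic (depends (snd Q))"
    and "\<forall>r\<in>snd Q. time_local_rule m r" "0 \<le> m"
    and "os \<in> answers_at Q F \<tau>"
  shows "os \<in> answers_at Q (facts_near F \<tau> (int (card (snd Q)) * m)) \<tau>"
proof -
  have "derivable (snd Q \<union> fact_rule ` facts_near F \<tau> (int (dep_rank (snd Q) (fst Q)) * m))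
      (GA (fst Q) os (Some \<tau>))"
    using derivable_facts_near_level[where h = "dep_rank (snd Q)", OF _ _ assms(3,4)]
      dep_rank_less[OF assms(1,2)] assms(5)
    by (fastforce simp: mem_answers_at_iff)
  moreover have "int (dep_rank (snd Q) (fst Q)) * m \<le> int (card (snd Q)) * m"
    using dep_rank_le_card[OF assms(1)] assms(4) by (simp add: mult_right_mono)
  ultimately show ?thesis
    by (simp add: mem_answers_at_iff) (metis derivable_mono_facts facts_near_mono)
qed

lemma answers_at_facts_near_radius:
  assumes "finite (snd Q)" "acyclic (depends (snd Q))"
    and "\<forall>r\<in>snd Q. time_local_rule (rule_radius r) r"
    and "os \<in> answers_at Q F \<tau>"
  shows "os \<in> answers_at Q (facts_near F \<tau> (prog_radius (snd Q))) \<tau>"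
proof -
  define m where "m = Max ({0} \<union> rule_radius ` snd Q)"
  have "0 \<le> m" and "\<forall>r\<in>snd Q. time_local_rule m r"
    using assms(1,3) by (auto simp: m_def intro: time_local_rule_mono)
  moreover have "prog_radius (snd Q) = int (card (snd Q)) * m"
    by (simp add: prog_radius_def m_def)
  ultimately show ?thesis using answers_at_facts_near[OF assms(1,2)] assms(4) by simp
qed

lemma nonrigid_temporal: "\<not> is_rigid sig p \<Longrightarrow> is_temporal sig p"
  by (cases "snd (sig p)") (auto simp: is_rigid_def is_temporal_def)

lemma atom_with_time_var:
  assumes "wf_atom sig a" "\<not> is_rigid sig (apred a)" "\<forall>c. atime a \<noteq> Some (TC c)"
  obtains q os v k where "a = Atom q os (Some (TV v k))"
proof -
  obtain q os t where a: "a = Atom q os t" by (cases a)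
  with assms obtain s where "t = Some s"
    by (cases "snd (sig q)") (auto simp: is_rigid_def)
  with that assms a show ?thesis by (cases s) auto
qed

lemma offset_le_rule_radius:
  assumes "atime (snd r) = Some (TV v k)" "b \<in> set (fst r)" "atime b = Some (TV v' kb)"
  shows "\<bar>k - kb\<bar> \<le> rule_radius r"
proof -
  let ?S = "{\<bar>delta s - delta s'\<bar> | s s' a.
    atime (snd r) = Some s \<and> a \<in> set (fst r) \<and> atime a = Some s'}"
  have "?S \<subseteq> (\<lambda>a. \<bar>k - delta (the (atime a))\<bar>) ` set (fst r)"
    using assms(1) by (auto intro: rev_image_eqI)
  then have "finite ?S" by (rule finite_subset) simp
  moreover have "\<bar>k - kb\<bar> \<in> ?S"
    using assms by (intro CollectI exI[of _ "TV v k"] exI[of _ "TV v' kb"] exI[of _ b]) auto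
  ultimately show ?thesis unfolding rule_radius_def by (intro Max_ge) auto
qed

definition temporal_rule :: "'p signature \<Rightarrow> ('p,'o) rule \<Rightarrow> bool" where
  "temporal_rule sig r = ((\<exists>q os v k. snd r = Atom q os (Some (TV v k)) \<and> \<not> is_edb sig q)
     \<and> (\<forall>b\<in>set (fst r). \<not> is_rigid sig (apred b)))"

lemma rule_shape:
  assumes wf: "wf_rule sig r" and conn: "connected_rule r"
    and nonrigid: "\<forall>a\<in>rule_atoms r. \<not> is_rigid sig (apred a)"
    and no_points: "\<forall>a\<in>rule_atoms r. \<forall>c. atime a \<noteq> Some (TC c)"
  shows "temporal_rule sig r \<and> time_local_rule (rule_radius r) r"
proof -
  have var: "\<exists>q os v k. a = Atom q os (Some (TV v k))" if "a \<in> rule_atoms r" for a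
  proof -
    have "wf_atom sig a" using that wf unfolding wf_rule_def rule_atoms_def by blast
    with that nonrigid no_points show ?thesis by (blast elim: atom_with_time_var)
  qed
  then obtain q os v k where head: "snd r = Atom q os (Some (TV v k))"
    unfolding rule_atoms_def by (meson list.set_intros(1))
  have "v \<in> (\<Union>a\<in>set (fst r). atvars a)" using wf head unfolding wf_rule_def by auto
  then have idb: "\<not> is_edb sig q" using wf head unfolding wf_rule_def by auto
  have "\<exists>kb qb osb. b = Atom qb osb (Some (TV v kb)) \<and> \<bar>k - kb\<bar> \<le> rule_radius r"
    if b: "b \<in> set (fst r)" for b
  proof -
    obtain qb osb vb kb where b_eq: "b = Atom qb osb (Some (TV vb kb))"
      using var[of b] b unfolding rule_atoms_def by auto
    then have "vb \<in> atvars (snd r)" using conn b unfolding connected_rule_def by fastforce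
    then have "vb = v" using head by simp
    with b b_eq head show ?thesis by (auto intro: offset_le_rule_radius)
  qed
  moreover have "\<forall>b\<in>set (fst r). \<not> is_rigid sig (apred b)"
    using nonrigid unfolding rule_atoms_def by simp
  ultimately show ?thesis
    unfolding temporal_rule_def time_local_rule_def using head idb by blast
qed

section \<open>The constructed program simulates the query\<close>

fun orig_gatom :: "('p,'o) gatom \<Rightarrow> ('p xpred,'o) gatom" where
  "orig_gatom (GA p os t) = GA (Orig p) os t"

lemma inj_orig_gatom: "inj orig_gatom"
proof (rule injI)
  fix f g :: "('p,'o) gatom"
  show "orig_gatom f = orig_gatom g \<Longrightarrow> f = g" by (cases f; cases g) auto
qed

lemma dataset_orig_gatom:
  assumes "is_update sig \<tau>in U" shows "dataset (xsig sig) (orig_gatom ` U)"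
proof -
  have "wf_gatom (xsig sig) (orig_gatom f) \<and> is_edb (xsig sig) (gpred (orig_gatom f))"
    if "f \<in> U" for f
    using that assms by (cases f) (auto simp: is_update_def dataset_def xsig_def is_edb_def)
  with assms show ?thesis unfolding is_update_def dataset_def by auto
qed

lemma history_restrict_after:
  "is_history sig \<tau>in D \<Longrightarrow> is_history sig \<tau>in (restrict_after D \<tau>)"
  unfolding is_history_def dataset_def restrict_after_def by (auto intro: finite_subset)

lemma facts_near_in_restrict_after:
  assumes "\<tau>mem + R < \<tau>"
  shows "facts_near (D \<union> U) \<tau> R \<subseteq> restrict_after D \<tau>mem \<union> U"
proof
  fix f assume f: "f \<in> facts_near (D \<union> U) \<tau> R"
  with assms have "\<tau>mem < s" if "gtime f = Some s" for s
    using that unfolding facts_near_def by fastforce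
  with f show "f \<in> restrict_after D \<tau>mem \<union> U"
    unfolding facts_near_def restrict_after_def by (cases "gtime f") auto
qed

lemma psi_idb: "\<not> is_edb sig p \<Longrightarrow> psi sig p = Orig p"
  by (simp add: psi_def)

lemma apred_psi_atom [simp]: "apred (psi_atom sig a) = psi sig (apred a)"
  by (cases a) simp

lemma gpred_inst [simp]: "gpred (inst \<nu> \<mu> a) = apred a"
  by (cases a) simp

lemma psi_gatom_inst: "psi_gatom sig (inst \<nu> \<mu> a) = inst \<nu> \<mu> (psi_atom sig a)"
  by (cases a) simp

lemma inst_subst_atom: "inst \<nu> \<mu> (subst_atom v c a) = inst \<nu> (\<mu>(v := c)) a"
proof -
  have "tinst \<mu> (subst_t v c s) = tinst (\<mu>(v := c)) s" for s by (cases s) auto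
  then show ?thesis by (cases a) (auto simp: option.map_comp comp_def)
qed

context
  fixes sig :: "'p signature" and Q :: "('p,'o) query" and \<tau>in \<tau>out \<tau>mem :: int
  assumes temporal_rules: "\<forall>r\<in>snd Q. temporal_rule sig r"
    and query_idb: "\<not> is_edb sig (fst Q)"
    and acyclic_query: "acyclic (depends (snd Q))"
begin

definition ext_prog :: "('p,'o) gatom set \<Rightarrow> ('p xpred,'o) gatom set \<Rightarrow> ('p xpred,'o) rule set" where
  "ext_prog E D' = constr_prog sig Q \<tau>out \<tau>mem \<union> fact_rule ` D0 Q \<tau>in \<tau>mem
     \<union> fact_rule ` psi_gatom sig ` E \<union> fact_rule ` D'"

definition relevant_update :: "('p xpred,'o) gatom set \<Rightarrow> ('p,'o) gatom set" where
  "relevant_update D' =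
     {f. orig_gatom f \<in> D' \<and> (\<exists>t. gtime f = Some t \<and> update_relevant Q \<tau>in \<tau>mem t)}"

abbreviation query_prog :: "('p,'o) gatom set \<Rightarrow> ('p,'o) rule set" where
  "query_prog F \<equiv> snd Q \<union> fact_rule ` F"

text \<open>The invariant of derivations in \<open>ext_prog E D'\<close>: every derived fact is backed by
  a derivation of \<open>Q\<close> from \<open>E\<close> and the update-relevant part of \<open>D'\<close>.\<close>

fun justified :: "('p,'o) gatom set \<Rightarrow> ('p xpred,'o) gatom set \<Rightarrow> ('p xpred,'o) gatom \<Rightarrow> bool" where
  "justified E D' (GA Bp os t) = (\<exists>\<tau>. t = Some \<tau> \<and> update_relevant Q \<tau>in \<tau>mem \<tau>)"
| "justified E D' (GA (Orig p) os t) =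
     ((if is_edb sig p then GA (Orig p) os t \<in> D' \<or> GA p os t \<in> E
       else derivable (query_prog (E \<union> relevant_update D')) (GA p os t))
      \<and> (p = fst Q \<longrightarrow> (\<exists>\<tau>. t = Some \<tau> \<and> output_relevant Q \<tau>out \<tau>mem \<tau>)))"
| "justified E D' (GA (Psi p) os t) = derivable (query_prog (E \<union> relevant_update D')) (GA p os t)"

lemma derivable_head_if_justified_body:
  assumes r: "r \<in> snd Q"
    and body: "\<forall>a\<in>set (fst r). justified E D' (inst \<nu> \<mu> (psi_atom sig a))"
  shows "derivable (query_prog (E \<union> relevant_update D')) (inst \<nu> \<mu> (snd r))"
proof (rule derivable.der)
  fix a assume a: "a \<in> set (fst r)"
  obtain q os t where a_eq: "a = Atom q os t" by (cases a)
  have "\<forall>b\<in>set (fst r). \<not> is_rigid sig (apred b)"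
    using temporal_rules r unfolding temporal_rule_def by blast
  then have "\<not> is_rigid sig q" using a a_eq by force
  then have "is_edb sig q \<Longrightarrow> psi sig q = Psi q"
    using nonrigid_temporal[of sig q] by (simp add: psi_def)
  with body a a_eq show "derivable (query_prog (E \<union> relevant_update D')) (inst \<nu> \<mu> a)"
    by (cases "is_edb sig q") (auto simp: psi_def)
qed (use r in simp)

lemma head_of_query_rule:
  assumes "r \<in> snd Q"
  obtains q os v k where "snd r = Atom q os (Some (TV v k))" "\<not> is_edb sig q"
  using assms temporal_rules unfolding temporal_rule_def by blast

lemma justified_copy_rule:
  assumes E: "is_history sig \<tau>in E" and D': "dataset (xsig sig) D'" and "is_edb sig p"
    and orig: "justified E D' (GA (Orig p) os (Some t))" and guard: "justified E D' (GA Bp [] (Some t))"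
  shows "justified E D' (GA (Psi p) os (Some t))"
proof -
  have "update_relevant Q \<tau>in \<tau>mem t" using guard by simp
  moreover from this have "GA p os (Some t) \<notin> E"
    using E unfolding is_history_def update_relevant_def by force
  ultimately have "GA p os (Some t) \<in> relevant_update D'"
    using orig \<open>is_edb sig p\<close> unfolding relevant_update_def by auto
  then show ?thesis by (auto intro: derivable_fact)
qed

lemma justified_constr_rule:
  assumes E: "is_history sig \<tau>in E" and D': "dataset (xsig sig) D'"
    and r: "r \<in> constr_prog sig Q \<tau>out \<tau>mem"
    and body: "\<forall>a\<in>set (fst r). justified E D' (inst \<nu> \<mu> a)"
  shows "justified E D' (inst \<nu> \<mu> (snd r))"
  using r unfolding constr_prog_def
proof (elim UnE CollectE exE conjE imageE)
  fix r0 assume r_eq: "r = psi_rule sig r0" and r0: "r0 \<in> snd Q"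
    and not_query: "apred (snd r) \<noteq> Orig (fst Q)"
  obtain q os v k where head: "snd r0 = Atom q os (Some (TV v k))" "\<not> is_edb sig q"
    using r0 by (rule head_of_query_rule)
  have "derivable (query_prog (E \<union> relevant_update D')) (inst \<nu> \<mu> (snd r0))"
    using r0 body r_eq by (intro derivable_head_if_justified_body) (auto simp: psi_rule_def)
  then show ?thesis using r_eq head not_query by (auto simp: psi_rule_def psi_idb)
next
  fix r1 v k \<tau> r0
  assume r_eq: "r = subst_rule v (\<tau> - k) r1" and r1: "r1 = psi_rule sig r0" and r0: "r0 \<in> snd Q"
    and query: "apred (snd r1) = Orig (fst Q)" and time: "atime (snd r1) = Some (TV v k)"
    and relevant: "output_relevant Q \<tau>out \<tau>mem \<tau>"
  obtain q os v' k' where head: "snd r0 = Atom q os (Some (TV v' k'))" "\<not> is_edb sig q"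
    using r0 by (rule head_of_query_rule)
  have "q = fst Q" "v' = v" "k' = k" using query time head r1 by (auto simp: psi_rule_def psi_idb)
  moreover have "derivable (query_prog (E \<union> relevant_update D')) (inst \<nu> (\<mu>(v := \<tau> - k)) (snd r0))"
    using r0 body r_eq r1
    by (intro derivable_head_if_justified_body) (auto simp: psi_rule_def subst_rule_def inst_subst_atom)
  ultimately show ?thesis using r_eq r1 head relevant query_idb
    by (simp add: psi_rule_def subst_rule_def psi_idb)
next
  fix p n assume r_eq: "r = ([Atom (Orig p) (map OV [0..<n]) (Some (TV 0 0)), Atom Bp [] (Some (TV 0 0))],
      Atom (Psi p) (map OV [0..<n]) (Some (TV 0 0)))" and "is_edb sig p"
  then have "justified E D' (GA (Orig p) (map (oinst \<nu>) (map OV [0..<n])) (Some (\<mu> 0)))"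
    and "justified E D' (GA Bp [] (Some (\<mu> 0)))"
    using body by (simp_all del: justified.simps)
  with r_eq show ?thesis
    using justified_copy_rule[OF E D' \<open>is_edb sig p\<close>] by (simp del: justified.simps)
qed

lemma justified_if_derivable:
  assumes E: "is_history sig \<tau>in E" and D': "dataset (xsig sig) D'"
  shows "derivable (ext_prog E D') g \<Longrightarrow> justified E D' g"
proof (induction rule: derivable.induct)
  case (der r \<nu> \<mu>)
  from der.hyps consider "r \<in> constr_prog sig Q \<tau>out \<tau>mem" | "r \<in> fact_rule ` D0 Q \<tau>in \<tau>mem"
    | e where "e \<in> E" "r = fact_rule (psi_gatom sig e)" | d where "d \<in> D'" "r = fact_rule d"
    unfolding ext_prog_def by blast
  then show ?case
  proof cases
    case 1
    with der.IH show ?thesis by (intro justified_constr_rule[OF E D']) auto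
  next
    case 2
    then show ?thesis unfolding D0_def by auto
  next
    case (3 e)
    then have fact: "inst \<nu> \<mu> (snd r) = psi_gatom sig e" by simp
    have "derivable (query_prog (E \<union> relevant_update D')) e"
      using 3 by (intro derivable_fact) auto
    moreover obtain p os t where e: "e = GA p os t" by (cases e)
    moreover from this 3 E query_idb have "is_edb sig p" "p \<noteq> fst Q"
      unfolding is_history_def dataset_def by auto
    ultimately show ?thesis using 3 unfolding fact by (auto simp: psi_def)
  next
    case (4 d)
    then have fact: "inst \<nu> \<mu> (snd r) = d" by simp
    obtain x os t where d: "d = GA x os t" by (cases d)
    with 4 D' obtain p where "x = Orig p" "is_edb sig p"
      unfolding dataset_def by (cases x) (auto simp: xsig_def is_edb_def)
    with 4 d query_idb show ?thesis unfolding fact by auto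
  qed
qed

definition needed :: "('p,'o) gatom \<Rightarrow> bool" where
  "needed g = (if gpred g = fst Q then \<exists>\<tau>. gtime g = Some \<tau> \<and> output_relevant Q \<tau>out \<tau>mem \<tau>
               else (fst Q, gpred g) \<in> (depends (snd Q))\<^sup>*)"

lemma needed_body:
  assumes r: "r \<in> snd Q" and a: "a \<in> set (fst r)" and head: "needed (inst \<nu> \<mu> (snd r))"
  shows "needed (inst \<nu> \<mu> a)"
proof -
  have dep: "(apred (snd r), apred a) \<in> depends (snd Q)"
    using r a unfolding depends_def by blast
  have "(fst Q, apred (snd r)) \<in> (depends (snd Q))\<^sup>*"
    using head unfolding needed_def by (auto split: if_splits)
  with dep have reach: "(fst Q, apred a) \<in> (depends (snd Q))\<^sup>+" by (rule rtrancl_into_trancl1[rotated])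
  then have "apred a \<noteq> fst Q" using acyclic_query by (auto simp: acyclic_def)
  with reach show ?thesis unfolding needed_def by simp
qed

lemma needed_edb_in_preds:
  assumes "needed f" "is_edb sig (gpred f)"
  shows "gpred f \<in> preds_of (snd Q)"
proof -
  have "(fst Q, gpred f) \<in> (depends (snd Q))\<^sup>+"
    using assms query_idb unfolding needed_def by (auto simp: rtrancl_eq_or_trancl split: if_splits)
  then obtain x where "(x, gpred f) \<in> depends (snd Q)" by (blast elim: tranclE)
  then obtain r a where "r \<in> snd Q" "a \<in> set (fst r)" "gpred f = apred a"
    unfolding depends_def by auto
  then have "r \<in> snd Q" "a \<in> rule_atoms r" "gpred f = apred a"
    unfolding rule_atoms_def by auto
  then show ?thesis unfolding preds_of_def by blast
qed

lemma ext_prog_derives_update_fact: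
  assumes D': "dataset (xsig sig) D'" and f: "f \<in> relevant_update D'"
    and p: "gpred f \<in> preds_of (snd Q)"
  shows "derivable (ext_prog E D') (psi_gatom sig f)"
proof -
  obtain p os t where f_eq: "f = GA p os (Some t)" and in_D': "GA (Orig p) os (Some t) \<in> D'"
    and relevant: "update_relevant Q \<tau>in \<tau>mem t"
    using f unfolding relevant_update_def by (cases f) auto
  have edb: "is_edb sig p" and "wf_gatom sig (GA p os (Some t))"
    using D' in_D' unfolding dataset_def by (auto simp: xsig_def is_edb_def split: pshape.splits)
  then obtain n where n: "snd (sig p) = Temporal n" "length os = n"
    by (cases "snd (sig p)") auto
  let ?copy = "([Atom (Orig p) (map OV [0..<n]) (Some (TV 0 0)), Atom Bp [] (Some (TV 0 0))],
    Atom (Psi p) (map OV [0..<n]) (Some (TV 0 0))) :: ('p xpred, 'o) rule"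
  have copy: "?copy \<in> ext_prog E D'"
    using p f_eq edb n unfolding ext_prog_def constr_prog_def by auto
  have objects: "map (oinst (nth os)) (map OV [0..<n]) = os"
    using n(2) map_nth[of os] by (simp add: comp_def)
  have "derivable (ext_prog E D') (GA (Orig p) os (Some t))"
    using in_D' unfolding ext_prog_def by (intro derivable_fact) blast
  moreover have "derivable (ext_prog E D') (GA Bp [] (Some t))"
    using relevant unfolding ext_prog_def D0_def by (intro derivable_fact) blast
  ultimately have "derivable (ext_prog E D') (inst (nth os) (\<lambda>_. t) (snd ?copy))"
    using objects by (intro derivable.der[OF copy]) auto
  then show ?thesis using objects f_eq edb n by (simp add: psi_def is_temporal_def)
qed

text \<open>A needed instance of a rule of \<open>Q\<close> is simulated by a rule of the construction: by the
  \<open>\<psi>\<close>-copy of the rule, or, for the query predicate, by its copy whose time variable is fixed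
  to the output-relevant point at hand.\<close>

lemma ext_prog_simulates_rule:
  assumes r: "r \<in> snd Q" and head: "needed (inst \<nu> \<mu> (snd r))"
  obtains r' \<mu>' where "r' \<in> ext_prog E D'"
    "inst \<nu> \<mu>' (snd r') = psi_gatom sig (inst \<nu> \<mu> (snd r))"
    "\<And>b. b \<in> set (fst r') \<Longrightarrow> \<exists>a\<in>set (fst r). inst \<nu> \<mu>' b = psi_gatom sig (inst \<nu> \<mu> a)"
proof -
  obtain q os v k where head_eq: "snd r = Atom q os (Some (TV v k))" "\<not> is_edb sig q"
    using r by (rule head_of_query_rule)
  have psi_r: "psi_rule sig r \<in> psi_rule sig ` snd Q" using r by blast
  show ?thesis
  proof (cases "q = fst Q")
    case True
    let ?r' = "subst_rule v (\<mu> v + k - k) (psi_rule sig r)"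
    have "output_relevant Q \<tau>out \<tau>mem (\<mu> v + k)" using head head_eq True unfolding needed_def by simp
    moreover have "apred (snd (psi_rule sig r)) = Orig (fst Q)"
      and "atime (snd (psi_rule sig r)) = Some (TV v k)"
      using head_eq True by (simp_all add: psi_rule_def psi_idb)
    ultimately have "?r' \<in> constr_prog sig Q \<tau>out \<tau>mem"
      using psi_r unfolding constr_prog_def by blast
    then show ?thesis
      by (intro that[of ?r' \<mu>]) (auto simp: ext_prog_def psi_rule_def subst_rule_def
          inst_subst_atom psi_gatom_inst)
  next
    case False
    then have "psi_rule sig r \<in> constr_prog sig Q \<tau>out \<tau>mem"
      using psi_r head_eq unfolding constr_prog_def by (auto simp: psi_rule_def psi_idb)
    then show ?thesis
      by (intro that[of "psi_rule sig r" \<mu>]) (auto simp: ext_prog_def psi_rule_def psi_gatom_inst)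
  qed
qed

lemma ext_prog_derives_needed:
  assumes D': "dataset (xsig sig) D'"
  shows "derivable (query_prog (E \<union> relevant_update D')) g \<Longrightarrow> needed g
    \<Longrightarrow> derivable (ext_prog E D') (psi_gatom sig g)"
proof (induction rule: derivable.induct)
  case (der r \<nu> \<mu>)
  from der.hyps(1) show ?case
  proof
    assume "r \<in> fact_rule ` (E \<union> relevant_update D')"
    then obtain f where f: "r = fact_rule f" "f \<in> E \<or> f \<in> relevant_update D'" by blast
    show ?thesis
    proof (cases "f \<in> E")
      case True
      with f show ?thesis unfolding ext_prog_def by (auto intro: derivable_fact)
    next
      case False
      with f have "f \<in> relevant_update D'" by blast
      moreover from this D' have "is_edb sig (gpred f)"
        unfolding relevant_update_def dataset_def
        by (cases f) (auto simp: xsig_def is_edb_def)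
      ultimately show ?thesis using D' der.prems f(1)
        by (auto intro: ext_prog_derives_update_fact needed_edb_in_preds)
    qed
  next
    assume r: "r \<in> snd Q"
    obtain r' \<mu>' where r': "r' \<in> ext_prog E D'"
      "inst \<nu> \<mu>' (snd r') = psi_gatom sig (inst \<nu> \<mu> (snd r))"
      "\<And>b. b \<in> set (fst r') \<Longrightarrow> \<exists>a\<in>set (fst r). inst \<nu> \<mu>' b = psi_gatom sig (inst \<nu> \<mu> a)"
      using ext_prog_simulates_rule[OF r der.prems] by blast
    have "derivable (ext_prog E D') (inst \<nu> \<mu>' b)" if "b \<in> set (fst r')" for b
      using r'(3)[OF that] der.IH needed_body[OF r _ der.prems] by metis
    then show ?thesis using derivable.der[OF r'(1)] r'(2) by metis
  qed
qed

lemma answers_ext_prog: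
  assumes E: "is_history sig \<tau>in E" and D': "dataset (xsig sig) D'"
  shows "(os, t) \<in> answers (Orig (fst Q), constr_prog sig Q \<tau>out \<tau>mem \<union> fact_rule ` D0 Q \<tau>in \<tau>mem
           \<union> fact_rule ` psi_gatom sig ` E) D'
    \<longleftrightarrow> (\<exists>\<tau>. t = Some \<tau> \<and> output_relevant Q \<tau>out \<tau>mem \<tau>
           \<and> os \<in> answers_at Q (E \<union> relevant_update D') \<tau>)"
proof -
  have "(os, t) \<in> answers (Orig (fst Q), constr_prog sig Q \<tau>out \<tau>mem \<union> fact_rule ` D0 Q \<tau>in \<tau>mem
           \<union> fact_rule ` psi_gatom sig ` E) D' \<longleftrightarrow> derivable (ext_prog E D') (GA (Orig (fst Q)) os t)"
    by (simp add: answers_def entails_iff_derivable ext_prog_def)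
  also have "\<dots> \<longleftrightarrow> (\<exists>\<tau>. t = Some \<tau> \<and> output_relevant Q \<tau>out \<tau>mem \<tau>
           \<and> os \<in> answers_at Q (E \<union> relevant_update D') \<tau>)"
  proof
    assume "derivable (ext_prog E D') (GA (Orig (fst Q)) os t)"
    then show "\<exists>\<tau>. t = Some \<tau> \<and> output_relevant Q \<tau>out \<tau>mem \<tau>
           \<and> os \<in> answers_at Q (E \<union> relevant_update D') \<tau>"
      using justified_if_derivable[OF E D', of "GA (Orig (fst Q)) os t"] query_idb
      by (auto simp: mem_answers_at_iff)
  next
    assume "\<exists>\<tau>. t = Some \<tau> \<and> output_relevant Q \<tau>out \<tau>mem \<tau>
           \<and> os \<in> answers_at Q (E \<union> relevant_update D') \<tau>"
    then show "derivable (ext_prog E D') (GA (Orig (fst Q)) os t)"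
      using ext_prog_derives_needed[OF D', of E "GA (fst Q) os t"] query_idb
      by (auto simp: mem_answers_at_iff needed_def psi_idb)
  qed
  finally show ?thesis .
qed

lemma relevant_update_is_update:
  assumes D': "dataset (xsig sig) D'" shows "is_update sig \<tau>in (relevant_update D')"
proof -
  have "relevant_update D' \<subseteq> orig_gatom -` D'" unfolding relevant_update_def by auto
  then have "finite (relevant_update D')"
    using D' inj_orig_gatom unfolding dataset_def by (meson finite_subset finite_vimageI)
  moreover have "wf_gatom sig f \<and> is_edb sig (gpred f)" if "f \<in> relevant_update D'" for f
    using that D' unfolding relevant_update_def dataset_def
    by (cases f) (auto simp: xsig_def is_edb_def)
  moreover have "\<exists>s. gtime f = Some s \<and> \<tau>in < s" if "f \<in> relevant_update D'" for f
    using that unfolding relevant_update_def update_relevant_def by auto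
  ultimately show ?thesis unfolding is_update_def dataset_def by blast
qed

lemma relevant_update_orig_subset: "relevant_update (orig_gatom ` U) \<subseteq> U"
  unfolding relevant_update_def using inj_orig_gatom by (auto dest: injD)

lemma facts_near_in_relevant_update:
  fixes D U :: "('p,'o) gatom set"
  assumes U: "is_update sig \<tau>in U" and near_mem: "\<tau> \<le> \<tau>mem + prog_radius (snd Q)"
  shows "facts_near (D \<union> U) \<tau> (prog_radius (snd Q)) \<subseteq> D \<union> relevant_update (orig_gatom ` U)"
proof
  fix f assume f: "f \<in> facts_near (D \<union> U) \<tau> (prog_radius (snd Q))"
  show "f \<in> D \<union> relevant_update (orig_gatom ` U)"
  proof (cases "f \<in> U")
    case True
    then obtain s where "gtime f = Some s" "\<tau>in < s" using U unfolding is_update_def by blast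
    moreover from this f have "s \<le> \<tau> + prog_radius (snd Q)" unfolding facts_near_def by force
    ultimately show ?thesis
      using True near_mem unfolding relevant_update_def update_relevant_def by auto
  qed (use f in \<open>auto simp: facts_near_def\<close>)
qed

lemma contained_if_forget_holds:
  assumes hist: "is_history sig \<tau>in D" and forget: "forget_holds sig Q D \<tau>in \<tau>out \<tau>mem"
  shows "contained (xsig sig) (Q1 sig Q D \<tau>in \<tau>out \<tau>mem) (Q2 sig Q D \<tau>in \<tau>out \<tau>mem)"
  unfolding contained_def
proof (intro allI impI subsetI)
  fix D' x assume D': "dataset (xsig sig) D'" and "x \<in> answers (Q1 sig Q D \<tau>in \<tau>out \<tau>mem) D'"
  then obtain os \<tau> where x: "x = (os, Some \<tau>)" and relevant: "output_relevant Q \<tau>out \<tau>mem \<tau>"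
    and "os \<in> answers_at Q (D \<union> relevant_update D') \<tau>"
    using answers_ext_prog[OF hist D'] unfolding Q1_def by (cases x) blast
  moreover have "answers_at Q (D \<union> relevant_update D') \<tau>
      = answers_at Q (restrict_after D \<tau>mem \<union> relevant_update D') \<tau>"
    using forget relevant_update_is_update[OF D'] relevant
    unfolding forget_holds_def output_relevant_def by blast
  ultimately show "x \<in> answers (Q2 sig Q D \<tau>in \<tau>out \<tau>mem) D'"
    using answers_ext_prog[OF history_restrict_after[OF hist] D'] unfolding Q2_def by auto
qed

lemma answers_at_restrict_if_contained:
  assumes hist: "is_history sig \<tau>in D"
    and contained: "contained (xsig sig) (Q1 sig Q D \<tau>in \<tau>out \<tau>mem) (Q2 sig Q D \<tau>in \<tau>out \<tau>mem)"
    and U: "is_update sig \<tau>in U" and relevant: "output_relevant Q \<tau>out \<tau>mem \<tau>"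
    and os: "os \<in> answers_at Q (D \<union> relevant_update (orig_gatom ` U)) \<tau>"
  shows "os \<in> answers_at Q (restrict_after D \<tau>mem \<union> U) \<tau>"
proof -
  have D': "dataset (xsig sig) (orig_gatom ` U)" using U by (rule dataset_orig_gatom)
  with hist relevant os have "(os, Some \<tau>) \<in> answers (Q1 sig Q D \<tau>in \<tau>out \<tau>mem) (orig_gatom ` U)"
    using answers_ext_prog unfolding Q1_def by blast
  then have "(os, Some \<tau>) \<in> answers (Q2 sig Q D \<tau>in \<tau>out \<tau>mem) (orig_gatom ` U)"
    using contained D' unfolding contained_def by blast
  then have "os \<in> answers_at Q (restrict_after D \<tau>mem \<union> relevant_update (orig_gatom ` U)) \<tau>"
    using answers_ext_prog[OF history_restrict_after[OF hist] D'] unfolding Q2_def by auto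
  moreover have "restrict_after D \<tau>mem \<union> relevant_update (orig_gatom ` U)
      \<subseteq> restrict_after D \<tau>mem \<union> U"
    using relevant_update_orig_subset by blast
  ultimately show ?thesis using answers_at_mono by blast
qed

lemma forget_holds_if_contained:
  assumes hist: "is_history sig \<tau>in D"
    and window: "\<And>F os \<tau>. os \<in> answers_at Q F \<tau>
      \<Longrightarrow> os \<in> answers_at Q (facts_near F \<tau> (prog_radius (snd Q))) \<tau>"
    and contained: "contained (xsig sig) (Q1 sig Q D \<tau>in \<tau>out \<tau>mem) (Q2 sig Q D \<tau>in \<tau>out \<tau>mem)"
  shows "forget_holds sig Q D \<tau>in \<tau>out \<tau>mem"
  unfolding forget_holds_def
proof (intro allI impI)
  fix U :: "('p,'o) gatom set" and \<tau> :: int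
  assume U: "is_update sig \<tau>in U" and "\<tau>out \<le> \<tau>"
  let ?R = "prog_radius (snd Q)"
  have "answers_at Q (D \<union> U) \<tau> \<subseteq> answers_at Q (restrict_after D \<tau>mem \<union> U) \<tau>"
  proof
    fix os assume "os \<in> answers_at Q (D \<union> U) \<tau>"
    then have near: "os \<in> answers_at Q (facts_near (D \<union> U) \<tau> ?R) \<tau>" by (rule window)
    show "os \<in> answers_at Q (restrict_after D \<tau>mem \<union> U) \<tau>"
    proof (cases "\<tau> \<le> \<tau>mem + ?R")
      case True
      then have "output_relevant Q \<tau>out \<tau>mem \<tau>"
        using \<open>\<tau>out \<le> \<tau>\<close> unfolding output_relevant_def by simp
      moreover have "os \<in> answers_at Q (D \<union> relevant_update (orig_gatom ` U)) \<tau>"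
        using near answers_at_mono[OF facts_near_in_relevant_update[OF U True]] by blast
      ultimately show ?thesis using answers_at_restrict_if_contained[OF hist contained U] by blast
    next
      case False
      then have "\<tau>mem + ?R < \<tau>" by simp
      with near show ?thesis using answers_at_mono[OF facts_near_in_restrict_after] by blast
    qed
  qed
  moreover have "answers_at Q (restrict_after D \<tau>mem \<union> U) \<tau> \<subseteq> answers_at Q (D \<union> U) \<tau>"
    by (rule answers_at_mono) (auto simp: restrict_after_def)
  ultimately show "answers_at Q (D \<union> U) \<tau> = answers_at Q (restrict_after D \<tau>mem \<union> U) \<tau>"
    by blast
qed

end

theorem lemma8:
  fixes sig :: "'p signature" and Q :: "('p,'o) query" and D :: "('p,'o) gatom set"
    and \<tau>in \<tau>out \<tau>mem :: int
  assumes "infinite (UNIV :: 'o set)"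
    and "forget_instance sig Q D \<tau>in \<tau>out \<tau>mem"
    and "nonrecursive (snd Q)"
    and "connected_prog (snd Q)"
    and "no_rigid_atoms sig (snd Q)"
    and "no_time_points (snd Q)"
  shows "forget_holds sig Q D \<tau>in \<tau>out \<tau>mem \<longleftrightarrow>
         contained (xsig sig) (Q1 sig Q D \<tau>in \<tau>out \<tau>mem) (Q2 sig Q D \<tau>in \<tau>out \<tau>mem)"
proof -
  have hist: "is_history sig \<tau>in D" and query_idb: "\<not> is_edb sig (fst Q)"
    and "wf_program sig (snd Q)"
    using assms(2) by (auto simp: forget_instance_def is_temporal_query_def is_query_def)
  then have finite: "finite (snd Q)" and wf: "\<forall>r\<in>snd Q. wf_rule sig r"
    by (auto simp: wf_program_def)
  have shape: "\<forall>r\<in>snd Q. temporal_rule sig r \<and> time_local_rule (rule_radius r) r"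
  proof
    fix r assume "r \<in> snd Q"
    with wf assms(4-6) show "temporal_rule sig r \<and> time_local_rule (rule_radius r) r"
      unfolding connected_prog_def no_rigid_atoms_def no_time_points_def by (intro rule_shape) auto
  qed
  have acyclic: "acyclic (depends (snd Q))" using assms(3) by (simp add: nonrecursive_def)
  with finite shape have "os \<in> answers_at Q (facts_near F \<tau> (prog_radius (snd Q))) \<tau>"
    if "os \<in> answers_at Q F \<tau>" for F os \<tau>
    using that by (auto intro: answers_at_facts_near_radius)
  with shape query_idb acyclic hist show ?thesis
    using contained_if_forget_holds forget_holds_if_contained by blast
qed

end
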